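(* For every PMCFG $G$, $L(G)\subseteq L(\mathcal{M}(G))$, where $\mathcal{M}(G)$ is the automaton with respect to $G$.
   Context: Composition functions. Fix variables $x_i^j$ ($i,j\in\mathbb{N}_+$). For $s_1,\dots,s_\ell,s\in\mathbb{N}_+$ a composition function of sort $(s_1\cdots s_\ell,s)$ over $\Sigma$ is given by a tuple $[u_1,\dots,u_s]$ with each $u_i$ a string over $\Sigma\cup\{x_i^j : i\in[\ell], j\in[s_i]\}$; it maps $((w_1^1,\dots,w_1^{s_1}),\dots,(w_\ell^1,\dots,w_\ell^{s_\ell}))$ to the $s$-tuple obtained from $(u_1,\dots,u_s)$ by replacing each $x_i^j$ by $w_i^j$ (variables may occur several times or not at all). PMCFG. $G=(N,\Sigma,I,R)$ with $N$ a finite set of nonterminals each with a sort in $\mathbb{N}_+$, $I$ a set of nonterminals of sort 1, $R$ a finite set of rules $A\to f(A_1,\dots,A_\ell)$ with $f$ of sort $(s_1\cdots s_\ell,s)$, $A$ of sort $s$, $A_i$ of sort $s_i$. Derivations from $A$: $r(d_1,\dots,d_\ell)$ with $r=A\to f(A_1,\dots,A_\ell)\in R$ and $d_i$ derivations from $A_i$; the generated tuple is $f$ applied to the tuples generated by the $d_i$. $L(G)$ = strings generated by derivations from some $S\in I$. Tree stacks and TSA. A tree stack over $\Gamma$ ($@\notin\Gamma$) is $(\xi,\rho)$ with $\xi:\mathbb{N}_+^*\rightharpoonup\Gamma\cup\{@\}$ of finite prefix-closed domain, $\xi(\varepsilon)=@$, labels elsewhere in $\Gamma$, and $\rho\in\mathrm{dom}(\xi)$.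 Predicates: $\mathrm{bottom}$ ($\rho=\varepsilon$), $\mathrm{equals}(\gamma)$ ($\xi(\rho)=\gamma$), and "all". Instructions: $\mathrm{id}$; $\mathrm{push}_n(\gamma)$ (defined iff $\rho n\notin\mathrm{dom}(\xi)$, result $(\xi[\rho n\mapsto\gamma],\rho n)$); $\mathrm{up}_n$ (defined iff $\rho n\in\mathrm{dom}(\xi)$, result $(\xi,\rho n)$); $\mathrm{down}$ ($(\xi,\rho n)\mapsto(\xi,\rho)$); $\mathrm{set}(\gamma)$ (defined iff $\rho\ne\varepsilon$, result $(\xi[\rho\mapsto\gamma],\rho)$). Initial tree stack $(\{\varepsilon\mapsto@\},\varepsilon)$. A TSA has finite states, initial state, final states and finitely many transitions $(q,\omega,p,f,q')$ ($\omega\in\Sigma\cup\{\varepsilon\}$); $(q,c,w)\vdash_\tau(q',c',w')$ iff $w=\omega w'$, $c\in p$, $f(c)=c'$ defined. A valid run goes from (initial state, initial tree stack, $w$) to (final state, some tree stack, $\varepsilon$); $L(\mathcal{M})$ is the set of such $w$. The automaton $\mathcal{M}(G)$ with respect to a PMCFG $G=(N,\Sigma,I,R)$. Let $\bar R=\{\langle r,i,j\rangle : r=A\to[u_1,\dots,u_s](A_1,\dots,A_\ell)\in R, i\in[s], j\in\{0,\dots,|u_i|\}\}$ and $\Box$ a fresh symbol. Stack alphabet $\Gamma=\{\Box\}\cup R\cup\bar R$; states $Q=\{q,q_+,q_- : q\in\bar R\cup\{\Box\}\}$ (with $q_+,q_-$ fresh copies); initial state $\Box$; final states $\{\Box\}$.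 The transition set is the smallest set containing: (i) for every $r=S\to[u](A_1,\dots,A_\ell)\in R$ with $S\in I$: $(\Box,\varepsilon,\text{all},\mathrm{push}_1(\Box),\langle r,1,0\rangle)$, $(\langle r,1,|u|\rangle,\varepsilon,\mathrm{equals}(\Box),\mathrm{set}(r),\Box_-)$, and $(\Box_-,\varepsilon,\text{all},\mathrm{down},\Box)$; (ii) for every $r=A\to[u_1,\dots,u_s](A_1,\dots,A_\ell)\in R$, $i\in[s]$, $j\in[|u_i|]$ such that the $j$-th symbol of $u_i$ is $\sigma\in\Sigma$: $(\langle r,i,j-1\rangle,\sigma,\text{all},\mathrm{id},\langle r,i,j\rangle)$; (iii) for every $r=A\to[u_1,\dots,u_s](A_1,\dots,A_\ell)\in R$, $i\in[s]$, $j\in[|u_i|]$, $\kappa\in[\ell]$, $r'=A_\kappa\to[v_1,\dots,v_{s'}](B_1,\dots,B_{\ell'})\in R$, $m\in[s']$ such that the $j$-th symbol of $u_i$ is $x_\kappa^m$, writing $q=\langle r,i,j\rangle$: $(\langle r,i,j-1\rangle,\varepsilon,\text{all},\mathrm{push}_\kappa(q),\langle r',m,0\rangle)$, $(\langle r,i,j-1\rangle,\varepsilon,\text{all},\mathrm{up}_\kappa,q_+)$, $(q_+,\varepsilon,\mathrm{equals}(r'),\mathrm{set}(q),\langle r',m,0\rangle)$, $(\langle r',m,|v_m|\rangle,\varepsilon,\mathrm{equals}(q),\mathrm{set}(r'),q_-)$, and $(q_-,\varepsilon,\text{all},\mathrm{down},q)$. *)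

theory Defs
  imports Main
begin

text \<open>Symbols of a composition function: terminals and variables X i j standing for x_i^j
  (1-based indices i, j).\<close>
datatype 'a sym = T 'a | X nat nat

text \<open>A rule A -> [u_1,...,u_s](A_1,...,A_l) is the triple (A, [u_1,...,u_s], [A_1,...,A_l]).\<close>
type_synonym ('n,'a) rule = "'n \<times> 'a sym list list \<times> 'n list"

record ('n,'a) pmcfg =
  nonterms :: "'n set"
  sort :: "'n \<Rightarrow> nat"
  terms :: "'a set"
  initials :: "'n set"
  rules :: "('n,'a) rule set"

definition comp_fun_sort :: "'a set \<Rightarrow> 'a sym list list \<Rightarrow> nat list \<Rightarrow> nat \<Rightarrow> bool" where
  "comp_fun_sort Sig us ss s \<longleftrightarrow> length us = s \<and> (\<forall>k<length ss. 1 \<le> ss ! k) \<and> 1 \<le> s \<and>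
     (\<forall>u\<in>set us. \<forall>\<sigma>\<in>set u. case \<sigma> of T a \<Rightarrow> a \<in> Sig
        | X i j \<Rightarrow> 1 \<le> i \<and> i \<le> length ss \<and> 1 \<le> j \<and> j \<le> ss ! (i - 1))"

definition wf_pmcfg :: "('n,'a) pmcfg \<Rightarrow> bool" where
  "wf_pmcfg G \<longleftrightarrow> finite (nonterms G) \<and> finite (terms G) \<and> finite (rules G) \<and>
     (\<forall>A\<in>nonterms G. 1 \<le> sort G A) \<and>
     initials G \<subseteq> nonterms G \<and> (\<forall>S\<in>initials G. sort G S = 1) \<and>
     (\<forall>(A, us, As)\<in>rules G. A \<in> nonterms G \<and> set As \<subseteq> nonterms G \<and>
        comp_fun_sort (terms G) us (map (sort G) As) (sort G A))"

definition apply_comp :: "'a sym list list \<Rightarrow> 'a list list list \<Rightarrow> 'a list list" where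
  "apply_comp us ws = map (\<lambda>u. concat (map (\<lambda>\<sigma>. case \<sigma> of T a \<Rightarrow> [a]
        | X i j \<Rightarrow> ws ! (i - 1) ! (j - 1)) u)) us"

inductive generates :: "('n,'a) pmcfg \<Rightarrow> 'n \<Rightarrow> 'a list list \<Rightarrow> bool" for G where
  "(A, us, As) \<in> rules G \<Longrightarrow> length ws = length As \<Longrightarrow>
   (\<forall>k<length As. generates G (As ! k) (ws ! k)) \<Longrightarrow>
   generates G A (apply_comp us ws)"

definition pmcfg_lang :: "('n,'a) pmcfg \<Rightarrow> 'a list set" where
  "pmcfg_lang G = {w. \<exists>S\<in>initials G. generates G S [w]}"

datatype 'g tlab = At | Lab 'g

text \<open>Positions in N_+^* are lists of naturals; rho n is rho @ [n].\<close>
type_synonym 'g tstack = "(nat list \<Rightarrow> 'g tlab option) \<times> nat list"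

datatype 'g pred = Bottom | Equals 'g | PAll

datatype 'g instr = Id | Push nat 'g | Up nat | Down | SetI 'g

fun pred_holds :: "'g pred \<Rightarrow> 'g tstack \<Rightarrow> bool" where
  "pred_holds Bottom (\<xi>, \<rho>) = (\<rho> = [])"
| "pred_holds (Equals \<gamma>) (\<xi>, \<rho>) = (\<xi> \<rho> = Some (Lab \<gamma>))"
| "pred_holds PAll c = True"

fun instr_app :: "'g instr \<Rightarrow> 'g tstack \<Rightarrow> 'g tstack option" where
  "instr_app Id c = Some c"
| "instr_app (Push n \<gamma>) (\<xi>, \<rho>) =
     (if 0 < n \<and> \<xi> (\<rho> @ [n]) = None then Some (\<xi>(\<rho> @ [n] \<mapsto> Lab \<gamma>), \<rho> @ [n]) else None)"
| "instr_app (Up n) (\<xi>, \<rho>) =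
     (if 0 < n \<and> \<xi> (\<rho> @ [n]) \<noteq> None then Some (\<xi>, \<rho> @ [n]) else None)"
| "instr_app Down (\<xi>, \<rho>) = (if \<rho> = [] then None else Some (\<xi>, butlast \<rho>))"
| "instr_app (SetI \<gamma>) (\<xi>, \<rho>) = (if \<rho> = [] then None else Some (\<xi>(\<rho> \<mapsto> Lab \<gamma>), \<rho>))"

definition init_ts :: "'g tstack" where
  "init_ts = ([[] \<mapsto> At], [])"

text \<open>Transitions (q, omega, p, f, q'); omega = None stands for epsilon.\<close>
record ('q,'a,'g) tsa =
  states :: "'q set"
  stack_alph :: "'g set"
  init :: 'q
  finals :: "'q set"
  trans :: "('q \<times> 'a option \<times> 'g pred \<times> 'g instr \<times> 'q) set"

definition tsa_step :: "('q,'a,'g) tsa \<Rightarrow> (('q \<times> 'g tstack \<times> 'a list) \<times> ('q \<times> 'g tstack \<times> 'a list)) set" where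
  "tsa_step M = {((q, c, w), (q', c', w')). \<exists>\<omega> p f. (q, \<omega>, p, f, q') \<in> trans M \<and>
      w = (case \<omega> of None \<Rightarrow> w' | Some a \<Rightarrow> a # w') \<and> pred_holds p c \<and> instr_app f c = Some c'}"

definition tsa_lang :: "('q,'a,'g) tsa \<Rightarrow> 'a list set" where
  "tsa_lang M = {w. \<exists>qf c. ((init M, init_ts, w), (qf, c, [])) \<in> (tsa_step M)\<^sup>* \<and> qf \<in> finals M}"

datatype ('n,'a) gsym = GBox | GRule "('n,'a) rule" | GItem "('n,'a) rule" nat nat

datatype ('n,'a) qbase = QBox | QItem "('n,'a) rule" nat nat

text \<open>States q, q_+, q_-.\<close>
datatype ('n,'a) mstate = St "('n,'a) qbase" | StP "('n,'a) qbase" | StM "('n,'a) qbase"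

definition items :: "('n,'a) pmcfg \<Rightarrow> (('n,'a) rule \<times> nat \<times> nat) set" where
  "items G = {(r, i, j). r \<in> rules G \<and> 1 \<le> i \<and> i \<le> length (fst (snd r)) \<and>
                         j \<le> length (fst (snd r) ! (i - 1))}"

inductive_set mtrans :: "('n,'a) pmcfg \<Rightarrow>
    (('n,'a) mstate \<times> 'a option \<times> ('n,'a) gsym pred \<times> ('n,'a) gsym instr \<times> ('n,'a) mstate) set"
  for G where
  i1: "r = (S, [u], As) \<Longrightarrow> r \<in> rules G \<Longrightarrow> S \<in> initials G \<Longrightarrow>
       (St QBox, None, PAll, Push 1 GBox, St (QItem r 1 0)) \<in> mtrans G"
| i2: "r = (S, [u], As) \<Longrightarrow> r \<in> rules G \<Longrightarrow> S \<in> initials G \<Longrightarrow>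
       (St (QItem r 1 (length u)), None, Equals GBox, SetI (GRule r), StM QBox) \<in> mtrans G"
| i3: "r = (S, [u], As) \<Longrightarrow> r \<in> rules G \<Longrightarrow> S \<in> initials G \<Longrightarrow>
       (StM QBox, None, PAll, Down, St QBox) \<in> mtrans G"
| ii: "r = (A, us, As) \<Longrightarrow> r \<in> rules G \<Longrightarrow> 1 \<le> i \<Longrightarrow> i \<le> length us \<Longrightarrow>
       1 \<le> j \<Longrightarrow> j \<le> length (us ! (i - 1)) \<Longrightarrow> us ! (i - 1) ! (j - 1) = T \<sigma> \<Longrightarrow>
       (St (QItem r i (j - 1)), Some \<sigma>, PAll, Id, St (QItem r i j)) \<in> mtrans G"
| iii1: "r = (A, us, As) \<Longrightarrow> r \<in> rules G \<Longrightarrow> 1 \<le> i \<Longrightarrow> i \<le> length us \<Longrightarrow>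
       1 \<le> j \<Longrightarrow> j \<le> length (us ! (i - 1)) \<Longrightarrow> 1 \<le> \<kappa> \<Longrightarrow> \<kappa> \<le> length As \<Longrightarrow>
       r' = (As ! (\<kappa> - 1), vs, Bs) \<Longrightarrow> r' \<in> rules G \<Longrightarrow> 1 \<le> m \<Longrightarrow> m \<le> length vs \<Longrightarrow>
       us ! (i - 1) ! (j - 1) = X \<kappa> m \<Longrightarrow>
       (St (QItem r i (j - 1)), None, PAll, Push \<kappa> (GItem r i j), St (QItem r' m 0)) \<in> mtrans G"
| iii2: "r = (A, us, As) \<Longrightarrow> r \<in> rules G \<Longrightarrow> 1 \<le> i \<Longrightarrow> i \<le> length us \<Longrightarrow>
       1 \<le> j \<Longrightarrow> j \<le> length (us ! (i - 1)) \<Longrightarrow> 1 \<le> \<kappa> \<Longrightarrow> \<kappa> \<le> length As \<Longrightarrow>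
       r' = (As ! (\<kappa> - 1), vs, Bs) \<Longrightarrow> r' \<in> rules G \<Longrightarrow> 1 \<le> m \<Longrightarrow> m \<le> length vs \<Longrightarrow>
       us ! (i - 1) ! (j - 1) = X \<kappa> m \<Longrightarrow>
       (St (QItem r i (j - 1)), None, PAll, Up \<kappa>, StP (QItem r i j)) \<in> mtrans G"
| iii3: "r = (A, us, As) \<Longrightarrow> r \<in> rules G \<Longrightarrow> 1 \<le> i \<Longrightarrow> i \<le> length us \<Longrightarrow>
       1 \<le> j \<Longrightarrow> j \<le> length (us ! (i - 1)) \<Longrightarrow> 1 \<le> \<kappa> \<Longrightarrow> \<kappa> \<le> length As \<Longrightarrow>
       r' = (As ! (\<kappa> - 1), vs, Bs) \<Longrightarrow> r' \<in> rules G \<Longrightarrow> 1 \<le> m \<Longrightarrow> m \<le> length vs \<Longrightarrow>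
       us ! (i - 1) ! (j - 1) = X \<kappa> m \<Longrightarrow>
       (StP (QItem r i j), None, Equals (GRule r'), SetI (GItem r i j), St (QItem r' m 0)) \<in> mtrans G"
| iii4: "r = (A, us, As) \<Longrightarrow> r \<in> rules G \<Longrightarrow> 1 \<le> i \<Longrightarrow> i \<le> length us \<Longrightarrow>
       1 \<le> j \<Longrightarrow> j \<le> length (us ! (i - 1)) \<Longrightarrow> 1 \<le> \<kappa> \<Longrightarrow> \<kappa> \<le> length As \<Longrightarrow>
       r' = (As ! (\<kappa> - 1), vs, Bs) \<Longrightarrow> r' \<in> rules G \<Longrightarrow> 1 \<le> m \<Longrightarrow> m \<le> length vs \<Longrightarrow>
       us ! (i - 1) ! (j - 1) = X \<kappa> m \<Longrightarrow>
       (St (QItem r' m (length (vs ! (m - 1)))), None, Equals (GItem r i j), SetI (GRule r'),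
        StM (QItem r i j)) \<in> mtrans G"
| iii5: "r = (A, us, As) \<Longrightarrow> r \<in> rules G \<Longrightarrow> 1 \<le> i \<Longrightarrow> i \<le> length us \<Longrightarrow>
       1 \<le> j \<Longrightarrow> j \<le> length (us ! (i - 1)) \<Longrightarrow> 1 \<le> \<kappa> \<Longrightarrow> \<kappa> \<le> length As \<Longrightarrow>
       r' = (As ! (\<kappa> - 1), vs, Bs) \<Longrightarrow> r' \<in> rules G \<Longrightarrow> 1 \<le> m \<Longrightarrow> m \<le> length vs \<Longrightarrow>
       us ! (i - 1) ! (j - 1) = X \<kappa> m \<Longrightarrow>
       (StM (QItem r i j), None, PAll, Down, St (QItem r i j)) \<in> mtrans G"

definition automaton :: "('n,'a) pmcfg \<Rightarrow> (('n,'a) mstate, 'a, ('n,'a) gsym) tsa" where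
  "automaton G =
    \<lparr> states = (let Qb = {QBox} \<union> {QItem r i j | r i j. (r, i, j) \<in> items G}
               in St ` Qb \<union> StP ` Qb \<union> StM ` Qb),
      stack_alph = {GBox} \<union> GRule ` rules G \<union> {GItem r i j | r i j. (r, i, j) \<in> items G},
      init = St QBox,
      finals = {St QBox},
      trans = mtrans G \<rparr>"

end

theory Submission
  imports Defs
begin

text \<open>Derivation trees of G are simulated depth-first on the tree stack, the node at
  position \<rho> having its \<kappa>-th child at \<rho> @ [\<kappa>]. The invariant is that whenever a component
  of the tuple at \<rho> is about to be read, the stack below \<rho> is consistent with the derivation:
  the subtree of each child is either still empty, so the automaton enters it by a push, or
  its root carries the child's rule, so it is re-entered by an up move and the equals test.
  By induction on derivations, reading a component returns to \<rho>, preserves consistency and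
  changes the stack only strictly below \<rho>; at the root this yields an accepting run.\<close>

datatype ('n,'a) dtree = DNode (drule: "('n,'a) rule") "('n,'a) dtree list"

inductive derivation :: "('n,'a) pmcfg \<Rightarrow> ('n,'a) dtree \<Rightarrow> 'n \<Rightarrow> 'a list list \<Rightarrow> bool" for G where
  "(A, us, As) \<in> rules G \<Longrightarrow> length ws = length As \<Longrightarrow> length ds = length As \<Longrightarrow>
   (\<forall>k<length As. derivation G (ds ! k) (As ! k) (ws ! k)) \<Longrightarrow>
   derivation G (DNode (A, us, As) ds) A (apply_comp us ws)"

lemma generates_imp_derivation: "generates G A t \<Longrightarrow> \<exists>d. derivation G d A t"
proof (induction rule: generates.induct)
  case (1 A us As ws)
  define d where "d k = (SOME d. derivation G d (As ! k) (ws ! k))" for k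
  have "derivation G (d k) (As ! k) (ws ! k)" if "k < length As" for k
    using "1.IH" that unfolding d_def by (auto intro: someI_ex)
  then have "derivation G (DNode (A, us, As) (map d [0..<length As])) A (apply_comp us ws)"
    using "1.hyps" by (intro derivation.intros) auto
  then show ?case by blast
qed

lemma derivation_root:
  assumes "derivation G d A t"
  obtains vs Bs ds where "d = DNode (A, vs, Bs) ds" "(A, vs, Bs) \<in> rules G" "length t = length vs"
  using assms by (cases rule: derivation.cases) (auto simp: apply_comp_def)

definition eval_sym :: "'a list list list \<Rightarrow> 'a sym \<Rightarrow> 'a list" where
  "eval_sym ws \<sigma> = (case \<sigma> of T a \<Rightarrow> [a] | X i j \<Rightarrow> ws ! (i - 1) ! (j - 1))"

lemma nth_apply_comp:
  "k < length us \<Longrightarrow> apply_comp us ws ! k = concat (map (eval_sym ws) (us ! k))"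
  unfolding apply_comp_def eval_sym_def[abs_def] by simp

lemma wf_pmcfg_rule_arity:
  "wf_pmcfg G \<Longrightarrow> (A, us, As) \<in> rules G \<Longrightarrow> length us = sort G A"
  unfolding wf_pmcfg_def comp_fun_sort_def by fastforce

lemma wf_pmcfg_variable_bounds:
  assumes "wf_pmcfg G" "(A, us, As) \<in> rules G" "u \<in> set us" "X \<kappa> m \<in> set u"
  shows "1 \<le> \<kappa> \<and> \<kappa> \<le> length As \<and> 1 \<le> m \<and> m \<le> sort G (As ! (\<kappa> - 1))"
  using assms unfolding wf_pmcfg_def comp_fun_sort_def by fastforce

text \<open>Child k of a node (counted from 0) sits at position \<rho> @ [Suc k].\<close>
inductive consistent :: "('n,'a) dtree \<Rightarrow> (nat list \<Rightarrow> ('n,'a) gsym tlab option) \<Rightarrow> nat list \<Rightarrow> bool" where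
  "(\<forall>k<length ds. (\<forall>q. \<xi> (\<rho> @ Suc k # q) = None) \<or>
      (\<xi> (\<rho> @ [Suc k]) = Some (Lab (GRule (drule (ds ! k)))) \<and> consistent (ds ! k) \<xi> (\<rho> @ [Suc k])))
   \<Longrightarrow> consistent (DNode r ds) \<xi> \<rho>"

lemma consistent_cong:
  "consistent d \<xi> \<rho> \<Longrightarrow> (\<forall>k q. \<xi>' (\<rho> @ k # q) = \<xi> (\<rho> @ k # q)) \<Longrightarrow> consistent d \<xi>' \<rho>"
proof (induction arbitrary: \<xi>' rule: consistent.induct)
  case (1 ds \<xi> \<rho> r)
  have "\<forall>k' q. \<xi>' ((\<rho> @ [Suc k]) @ k' # q) = \<xi> ((\<rho> @ [Suc k]) @ k' # q)" for k
    using "1.prems" by simp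
  with 1 show ?case
    by (intro consistent.intros) auto
qed

lemma consistent_if_unvisited: "\<forall>k q. \<xi> (\<rho> @ k # q) = None \<Longrightarrow> consistent d \<xi> \<rho>"
proof (induction d arbitrary: \<rho>)
  case (DNode r ds)
  then show ?case by (intro consistent.intros) auto
qed

lemma consistent_update_child:
  assumes "consistent (DNode r ds) \<xi> \<rho>" "1 \<le> \<kappa>" "\<kappa> \<le> length ds"
    and outside: "\<forall>p. (\<forall>q. p \<noteq> \<rho> @ \<kappa> # q) \<longrightarrow> \<xi>' p = \<xi> p"
    and "\<xi>' (\<rho> @ [\<kappa>]) = Some (Lab (GRule (drule (ds ! (\<kappa> - 1)))))"
    and "consistent (ds ! (\<kappa> - 1)) \<xi>' (\<rho> @ [\<kappa>])"
  shows "consistent (DNode r ds) \<xi>' \<rho>"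
proof (intro consistent.intros allI impI)
  fix k assume k: "k < length ds"
  show "(\<forall>q. \<xi>' (\<rho> @ Suc k # q) = None) \<or>
    (\<xi>' (\<rho> @ [Suc k]) = Some (Lab (GRule (drule (ds ! k)))) \<and> consistent (ds ! k) \<xi>' (\<rho> @ [Suc k]))"
  proof (cases "Suc k = \<kappa>")
    case True
    with assms show ?thesis by auto
  next
    case False
    then have same: "\<xi>' (\<rho> @ Suc k # q) = \<xi> (\<rho> @ Suc k # q)" for q
      using outside by auto
    from assms(1) k have "(\<forall>q. \<xi> (\<rho> @ Suc k # q) = None) \<or>
      (\<xi> (\<rho> @ [Suc k]) = Some (Lab (GRule (drule (ds ! k)))) \<and> consistent (ds ! k) \<xi> (\<rho> @ [Suc k]))"
      by (cases rule: consistent.cases) auto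
    then show ?thesis
      using same consistent_cong[of "ds ! k" \<xi> "\<rho> @ [Suc k]" \<xi>'] by auto
  qed
qed

definition unchanged_outside :: "nat list \<Rightarrow> (nat list \<Rightarrow> 'x option) \<Rightarrow> (nat list \<Rightarrow> 'x option) \<Rightarrow> bool" where
  "unchanged_outside \<rho> \<xi> \<xi>' \<longleftrightarrow> (\<forall>p. (\<forall>k q. p \<noteq> \<rho> @ k # q) \<longrightarrow> \<xi>' p = \<xi> p)"

lemma unchanged_outside_refl: "unchanged_outside \<rho> \<xi> \<xi>"
  by (simp add: unchanged_outside_def)

lemma unchanged_outside_trans:
  "unchanged_outside \<rho> \<xi>1 \<xi>2 \<Longrightarrow> unchanged_outside \<rho> \<xi>2 \<xi>3 \<Longrightarrow> unchanged_outside \<rho> \<xi>1 \<xi>3"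
  by (simp add: unchanged_outside_def)

lemma unchanged_outside_root: "unchanged_outside \<rho> \<xi> \<xi>' \<Longrightarrow> \<xi>' \<rho> = \<xi> \<rho>"
  unfolding unchanged_outside_def by (erule allE[of _ \<rho>]) simp

abbreviation runs :: "('n,'a) pmcfg \<Rightarrow> _ \<Rightarrow> _ \<Rightarrow> bool" where
  "runs G c c' \<equiv> (c, c') \<in> (tsa_step (automaton G))\<^sup>*"

lemma tsa_step_of_mtrans:
  "(q, \<omega>, p, f, q') \<in> mtrans G \<Longrightarrow> pred_holds p c \<Longrightarrow> instr_app f c = Some c' \<Longrightarrow>
   w = (case \<omega> of None \<Rightarrow> w' | Some a \<Rightarrow> a # w') \<Longrightarrow>
   ((q, c, w), (q', c', w')) \<in> tsa_step (automaton G)"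
  by (auto simp: tsa_step_def automaton_def)

lemma tsa_steps_append_input:
  assumes "((q, c, x), (q', c', y)) \<in> (tsa_step M)\<^sup>*"
  shows "((q, c, x @ w), (q', c', y @ w)) \<in> (tsa_step M)\<^sup>*"
  using assms
proof (induction "(q', c', y)" arbitrary: q' c' y rule: rtrancl_induct)
  case (step s)
  obtain q1 c1 y1 where "s = (q1, c1, y1)" by (cases s)
  with step have "((q1, c1, y1 @ w), (q', c', y @ w)) \<in> tsa_step M"
    by (auto simp: tsa_step_def split: option.splits)
  with step \<open>s = (q1, c1, y1)\<close> show ?case by auto
qed simp

text \<open>The side condition of the transitions (iii): the j-th symbol of the i-th component
  of r is the variable x_\<kappa>^m, and r' is a rule for the \<kappa>-th nonterminal of r.\<close>
inductive calls :: "('n,'a) pmcfg \<Rightarrow> ('n,'a) rule \<Rightarrow> nat \<Rightarrow> nat \<Rightarrow> nat \<Rightarrow> ('n,'a) rule \<Rightarrow> nat \<Rightarrow> bool"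
  for G where
  "(A, us, As) \<in> rules G \<Longrightarrow> 1 \<le> i \<Longrightarrow> i \<le> length us \<Longrightarrow> 1 \<le> j \<Longrightarrow> j \<le> length (us ! (i - 1)) \<Longrightarrow>
   1 \<le> \<kappa> \<Longrightarrow> \<kappa> \<le> length As \<Longrightarrow> (As ! (\<kappa> - 1), vs, Bs) \<in> rules G \<Longrightarrow> 1 \<le> m \<Longrightarrow> m \<le> length vs \<Longrightarrow>
   us ! (i - 1) ! (j - 1) = X \<kappa> m \<Longrightarrow> calls G (A, us, As) i j \<kappa> (As ! (\<kappa> - 1), vs, Bs) m"

lemma calls_mtrans:
  assumes "calls G r i j \<kappa> r' m"
  shows "(St (QItem r i (j - 1)), None, PAll, Push \<kappa> (GItem r i j), St (QItem r' m 0)) \<in> mtrans G"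
    and "(St (QItem r i (j - 1)), None, PAll, Up \<kappa>, StP (QItem r i j)) \<in> mtrans G"
    and "(StP (QItem r i j), None, Equals (GRule r'), SetI (GItem r i j), St (QItem r' m 0)) \<in> mtrans G"
    and "(St (QItem r' m (length (fst (snd r') ! (m - 1)))), None, Equals (GItem r i j),
          SetI (GRule r'), StM (QItem r i j)) \<in> mtrans G"
    and "(StM (QItem r i j), None, PAll, Down, St (QItem r i j)) \<in> mtrans G"
  by (rule calls.cases[OF assms]; (simp only: fst_conv snd_conv)?;
      rule mtrans.iii1[OF refl _ _ _ _ _ _ _ refl] mtrans.iii2[OF refl _ _ _ _ _ _ _ refl]
        mtrans.iii3[OF refl _ _ _ _ _ _ _ refl] mtrans.iii4[OF refl _ _ _ _ _ _ _ refl]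
        mtrans.iii5[OF refl _ _ _ _ _ _ _ refl];
      assumption)+

lemma read_terminal:
  assumes "r = (A, us, As)" "r \<in> rules G" "1 \<le> m" "m \<le> length us"
    and "j < length (us ! (m - 1))" "us ! (m - 1) ! j = T a"
  shows "((St (QItem r m j), c, a # x), (St (QItem r m (Suc j)), c, x)) \<in> tsa_step (automaton G)"
proof -
  have "(St (QItem r m (Suc j - 1)), Some a, PAll, Id, St (QItem r m (Suc j))) \<in> mtrans G"
    using assms by (intro mtrans.ii) auto
  then show ?thesis by (auto intro: tsa_step_of_mtrans)
qed

lemma enter_child:
  assumes call: "calls G r m (Suc j) \<kappa> (drule c) mm"
    and cons: "consistent (DNode r ds) \<xi> \<rho>" and child: "\<kappa> \<le> length ds" "ds ! (\<kappa> - 1) = c"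
  defines "\<xi>' \<equiv> \<xi>(\<rho> @ [\<kappa>] \<mapsto> Lab (GItem r m (Suc j)))"
  shows "runs G (St (QItem r m j), (\<xi>, \<rho>), x) (St (QItem (drule c) mm 0), (\<xi>', \<rho> @ [\<kappa>]), x)"
    and "consistent c \<xi>' (\<rho> @ [\<kappa>])"
proof -
  have \<kappa>: "1 \<le> \<kappa>" using call by cases auto
  note call_trans = calls_mtrans[OF call, simplified]
  from cons child \<kappa> consider
      (unvisited) "\<forall>q. \<xi> (\<rho> @ \<kappa> # q) = None"
    | (visited) "\<xi> (\<rho> @ [\<kappa>]) = Some (Lab (GRule (drule c)))" "consistent c \<xi> (\<rho> @ [\<kappa>])"
    by (cases rule: consistent.cases) (auto dest!: spec[of _ "\<kappa> - 1"])
  then have "runs G (St (QItem r m j), (\<xi>, \<rho>), x) (St (QItem (drule c) mm 0), (\<xi>', \<rho> @ [\<kappa>]), x) \<and>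
             consistent c \<xi>' (\<rho> @ [\<kappa>])"
  proof cases
    case unvisited
    have "((St (QItem r m j), (\<xi>, \<rho>), x), (St (QItem (drule c) mm 0), (\<xi>', \<rho> @ [\<kappa>]), x))
          \<in> tsa_step (automaton G)"
      by (rule tsa_step_of_mtrans[OF call_trans(1)]) (use unvisited \<kappa> in \<open>auto simp: \<xi>'_def\<close>)
    moreover have "consistent c \<xi>' (\<rho> @ [\<kappa>])"
      by (rule consistent_if_unvisited) (use unvisited in \<open>auto simp: \<xi>'_def\<close>)
    ultimately show ?thesis by auto
  next
    case visited
    have "((St (QItem r m j), (\<xi>, \<rho>), x), (StP (QItem r m (Suc j)), (\<xi>, \<rho> @ [\<kappa>]), x))
          \<in> tsa_step (automaton G)"
      by (rule tsa_step_of_mtrans[OF call_trans(2)]) (use visited \<kappa> in auto)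
    moreover have "((StP (QItem r m (Suc j)), (\<xi>, \<rho> @ [\<kappa>]), x), (St (QItem (drule c) mm 0), (\<xi>', \<rho> @ [\<kappa>]), x))
          \<in> tsa_step (automaton G)"
      by (rule tsa_step_of_mtrans[OF call_trans(3)]) (use visited in \<open>auto simp: \<xi>'_def\<close>)
    moreover have "consistent c \<xi>' (\<rho> @ [\<kappa>])"
      by (rule consistent_cong[OF visited(2)]) (auto simp: \<xi>'_def)
    ultimately show ?thesis by auto
  qed
  then show "runs G (St (QItem r m j), (\<xi>, \<rho>), x) (St (QItem (drule c) mm 0), (\<xi>', \<rho> @ [\<kappa>]), x)"
    and "consistent c \<xi>' (\<rho> @ [\<kappa>])" by blast+
qed

lemma return_from_child:
  assumes call: "calls G r m (Suc j) \<kappa> r' mm"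
    and "\<xi> (\<rho> @ [\<kappa>]) = Some (Lab (GItem r m (Suc j)))"
  shows "runs G (St (QItem r' mm (length (fst (snd r') ! (mm - 1)))), (\<xi>, \<rho> @ [\<kappa>]), x)
                (St (QItem r m (Suc j)), (\<xi>(\<rho> @ [\<kappa>] \<mapsto> Lab (GRule r')), \<rho>), x)"
proof -
  note call_trans = calls_mtrans[OF call]
  have "((St (QItem r' mm (length (fst (snd r') ! (mm - 1)))), (\<xi>, \<rho> @ [\<kappa>]), x),
         (StM (QItem r m (Suc j)), (\<xi>(\<rho> @ [\<kappa>] \<mapsto> Lab (GRule r')), \<rho> @ [\<kappa>]), x)) \<in> tsa_step (automaton G)"
    by (rule tsa_step_of_mtrans[OF call_trans(4)]) (use assms(2) in auto)
  moreover have "((StM (QItem r m (Suc j)), (\<xi>(\<rho> @ [\<kappa>] \<mapsto> Lab (GRule r')), \<rho> @ [\<kappa>]), x),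
         (St (QItem r m (Suc j)), (\<xi>(\<rho> @ [\<kappa>] \<mapsto> Lab (GRule r')), \<rho>), x)) \<in> tsa_step (automaton G)"
    by (rule tsa_step_of_mtrans[OF call_trans(5)]) auto
  ultimately show ?thesis by (meson r_into_rtrancl rtrancl_into_rtrancl)
qed

definition simulates :: "('n,'a) pmcfg \<Rightarrow> ('n,'a) dtree \<Rightarrow> 'a list list \<Rightarrow> bool" where
  "simulates G d t \<longleftrightarrow> (\<forall>m \<xi> \<rho>. 1 \<le> m \<and> m \<le> length t \<and> consistent d \<xi> \<rho> \<longrightarrow>
     (\<exists>\<xi>'. runs G (St (QItem (drule d) m 0), (\<xi>, \<rho>), t ! (m - 1))
                   (St (QItem (drule d) m (length (fst (snd (drule d)) ! (m - 1)))), (\<xi>', \<rho>), []) \<and>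
           consistent d \<xi>' \<rho> \<and> unchanged_outside \<rho> \<xi> \<xi>'))"

lemma read_variable:
  assumes call: "calls G r m (Suc j) \<kappa> (drule c) mm"
    and cons: "consistent (DNode r ds) \<xi> \<rho>" and child: "\<kappa> \<le> length ds" "ds ! (\<kappa> - 1) = c"
    and sim: "simulates G c t" and mm: "mm \<le> length t"
  obtains \<xi>' where "runs G (St (QItem r m j), (\<xi>, \<rho>), t ! (mm - 1)) (St (QItem r m (Suc j)), (\<xi>', \<rho>), [])"
    and "consistent (DNode r ds) \<xi>' \<rho>" and "unchanged_outside \<rho> \<xi> \<xi>'"
proof -
  define \<xi>1 where "\<xi>1 = \<xi>(\<rho> @ [\<kappa>] \<mapsto> Lab (GItem r m (Suc j)))"
  have \<kappa>: "1 \<le> \<kappa>" "1 \<le> mm" using call by (auto elim: calls.cases)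
  have run1: "runs G (St (QItem r m j), (\<xi>, \<rho>), t ! (mm - 1))
                     (St (QItem (drule c) mm 0), (\<xi>1, \<rho> @ [\<kappa>]), t ! (mm - 1))"
    and cons1: "consistent c \<xi>1 (\<rho> @ [\<kappa>])"
    using enter_child[OF call cons child] by (simp_all add: \<xi>1_def)
  obtain \<xi>2 where run2: "runs G (St (QItem (drule c) mm 0), (\<xi>1, \<rho> @ [\<kappa>]), t ! (mm - 1))
      (St (QItem (drule c) mm (length (fst (snd (drule c)) ! (mm - 1)))), (\<xi>2, \<rho> @ [\<kappa>]), [])"
    and cons2: "consistent c \<xi>2 (\<rho> @ [\<kappa>])" and out2: "unchanged_outside (\<rho> @ [\<kappa>]) \<xi>1 \<xi>2"
    using sim \<kappa> mm cons1 unfolding simulates_def by blast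
  define \<xi>3 where "\<xi>3 = \<xi>2(\<rho> @ [\<kappa>] \<mapsto> Lab (GRule (drule c)))"
  have "\<xi>2 (\<rho> @ [\<kappa>]) = Some (Lab (GItem r m (Suc j)))"
    using unchanged_outside_root[OF out2] by (simp add: \<xi>1_def)
  then have run3: "runs G (St (QItem (drule c) mm (length (fst (snd (drule c)) ! (mm - 1)))), (\<xi>2, \<rho> @ [\<kappa>]), [])
                          (St (QItem r m (Suc j)), (\<xi>3, \<rho>), [])"
    unfolding \<xi>3_def by (rule return_from_child[OF call])
  have outside: "\<forall>p. (\<forall>q. p \<noteq> \<rho> @ \<kappa> # q) \<longrightarrow> \<xi>3 p = \<xi> p"
    using out2 by (auto simp: unchanged_outside_def \<xi>1_def \<xi>3_def)
  have "consistent (DNode r ds) \<xi>3 \<rho>"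
  proof (rule consistent_update_child[OF cons \<kappa>(1) child(1) outside])
    show "consistent (ds ! (\<kappa> - 1)) \<xi>3 (\<rho> @ [\<kappa>])"
      unfolding child(2) by (rule consistent_cong[OF cons2]) (auto simp: \<xi>3_def)
  qed (use child in \<open>simp add: \<xi>3_def\<close>)
  moreover have "unchanged_outside \<rho> \<xi> \<xi>3"
    using outside by (auto simp: unchanged_outside_def)
  moreover have "runs G (St (QItem r m j), (\<xi>, \<rho>), t ! (mm - 1)) (St (QItem r m (Suc j)), (\<xi>3, \<rho>), [])"
    using run1 run2 run3 by (meson rtrancl_trans)
  ultimately show ?thesis using that by blast
qed

lemma read_component_prefix:
  assumes wf: "wf_pmcfg G" and r: "r = (A, us, As)" "r \<in> rules G"
    and lengths: "length ds = length As"
    and children: "\<forall>k<length As. derivation G (ds ! k) (As ! k) (ws ! k) \<and> simulates G (ds ! k) (ws ! k)"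
    and m: "1 \<le> m" "m \<le> length us" and cons: "consistent (DNode r ds) \<xi> \<rho>"
  shows "j \<le> length (us ! (m - 1)) \<Longrightarrow>
    \<exists>\<xi>'. runs G (St (QItem r m 0), (\<xi>, \<rho>), concat (map (eval_sym ws) (take j (us ! (m - 1)))))
                  (St (QItem r m j), (\<xi>', \<rho>), []) \<and>
         consistent (DNode r ds) \<xi>' \<rho> \<and> unchanged_outside \<rho> \<xi> \<xi>'"
proof (induction j)
  case 0
  show ?case using cons unchanged_outside_refl by auto
next
  case (Suc j)
  define u where "u = us ! (m - 1)"
  have j: "j < length u" using Suc.prems by (simp add: u_def)
  obtain \<xi>1 where run1: "runs G (St (QItem r m 0), (\<xi>, \<rho>), concat (map (eval_sym ws) (take j u)))
                                (St (QItem r m j), (\<xi>1, \<rho>), [])"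
    and cons1: "consistent (DNode r ds) \<xi>1 \<rho>" and out1: "unchanged_outside \<rho> \<xi> \<xi>1"
    using Suc j by (auto simp: u_def)
  have "\<exists>\<xi>2. runs G (St (QItem r m j), (\<xi>1, \<rho>), eval_sym ws (u ! j)) (St (QItem r m (Suc j)), (\<xi>2, \<rho>), []) \<and>
             consistent (DNode r ds) \<xi>2 \<rho> \<and> unchanged_outside \<rho> \<xi>1 \<xi>2"
  proof (cases "u ! j")
    case (T a)
    then have "((St (QItem r m j), (\<xi>1, \<rho>), eval_sym ws (u ! j)), (St (QItem r m (Suc j)), (\<xi>1, \<rho>), []))
               \<in> tsa_step (automaton G)"
      using read_terminal[OF r m, of j] j by (simp add: u_def eval_sym_def)
    then show ?thesis using cons1 unchanged_outside_refl by blast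
  next
    case (X \<kappa> mm)
    have "X \<kappa> mm \<in> set u" using j X by (metis nth_mem)
    moreover have "u \<in> set us" using m by (simp add: u_def)
    ultimately have bounds: "1 \<le> \<kappa>" "\<kappa> \<le> length As" "1 \<le> mm" "mm \<le> sort G (As ! (\<kappa> - 1))"
      using wf_pmcfg_variable_bounds[OF wf r(2)[unfolded r(1)]] by auto
    then have child: "derivation G (ds ! (\<kappa> - 1)) (As ! (\<kappa> - 1)) (ws ! (\<kappa> - 1))"
      "simulates G (ds ! (\<kappa> - 1)) (ws ! (\<kappa> - 1))"
      using children by auto
    obtain vs Bs ds' where c: "ds ! (\<kappa> - 1) = DNode (As ! (\<kappa> - 1), vs, Bs) ds'"
      "(As ! (\<kappa> - 1), vs, Bs) \<in> rules G" and len: "length (ws ! (\<kappa> - 1)) = length vs"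
      using child(1) by (rule derivation_root)
    have arity: "length vs = sort G (As ! (\<kappa> - 1))"
      using wf_pmcfg_rule_arity[OF wf c(2)] .
    have "calls G r m (Suc j) \<kappa> (drule (ds ! (\<kappa> - 1))) mm"
      unfolding r(1) c(1) dtree.sel
      by (rule calls.intros) (use r m j X bounds c arity in \<open>auto simp: u_def\<close>)
    from read_variable[OF this cons1 _ refl child(2)] obtain \<xi>2
      where "runs G (St (QItem r m j), (\<xi>1, \<rho>), ws ! (\<kappa> - 1) ! (mm - 1)) (St (QItem r m (Suc j)), (\<xi>2, \<rho>), [])"
        "consistent (DNode r ds) \<xi>2 \<rho>" "unchanged_outside \<rho> \<xi>1 \<xi>2"
      using bounds lengths len arity by auto
    then show ?thesis using X by (auto simp: eval_sym_def)
  qed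
  then obtain \<xi>2 where run2: "runs G (St (QItem r m j), (\<xi>1, \<rho>), eval_sym ws (u ! j))
                                     (St (QItem r m (Suc j)), (\<xi>2, \<rho>), [])"
    and cons2: "consistent (DNode r ds) \<xi>2 \<rho>" and out2: "unchanged_outside \<rho> \<xi>1 \<xi>2" by blast
  have "take (Suc j) u = take j u @ [u ! j]"
    using j by (simp add: take_Suc_conv_app_nth)
  then have "runs G (St (QItem r m 0), (\<xi>, \<rho>), concat (map (eval_sym ws) (take (Suc j) u)))
                    (St (QItem r m (Suc j)), (\<xi>2, \<rho>), [])"
    using rtrancl_trans[OF tsa_steps_append_input[OF run1, of "eval_sym ws (u ! j)", unfolded append_Nil] run2] by simp
  then show ?case
    unfolding u_def using cons2 unchanged_outside_trans[OF out1 out2] by blast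
qed

lemma derivation_simulates:
  assumes wf: "wf_pmcfg G"
  shows "derivation G d A t \<Longrightarrow> simulates G d t"
proof (induction rule: derivation.induct)
  case (1 A us As ws ds)
  show ?case unfolding simulates_def
  proof (intro allI impI, elim conjE)
    fix m \<xi> \<rho>
    assume m: "1 \<le> m" "m \<le> length (apply_comp us ws)" and cons: "consistent (DNode (A, us, As) ds) \<xi> \<rho>"
    then have "m \<le> length us" by (simp add: apply_comp_def)
    with read_component_prefix[OF wf refl "1.hyps"(1,3) "1.IH" m(1) _ cons order_refl] m(1)
    show "\<exists>\<xi>'. runs G (St (QItem (drule (DNode (A, us, As) ds)) m 0), (\<xi>, \<rho>), apply_comp us ws ! (m - 1))
        (St (QItem (drule (DNode (A, us, As) ds)) m
          (length (fst (snd (drule (DNode (A, us, As) ds))) ! (m - 1)))), (\<xi>', \<rho>), []) \<and>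
        consistent (DNode (A, us, As) ds) \<xi>' \<rho> \<and> unchanged_outside \<rho> \<xi> \<xi>'"
      by (simp add: nth_apply_comp)
  qed
qed

lemma accepting_run_of_initial_rule:
  assumes r: "r = (S, [u], As)" "r \<in> rules G" "S \<in> initials G"
    and run: "runs G (St (QItem r 1 0), ([[] \<mapsto> At, [1] \<mapsto> Lab GBox], [1]), w)
                     (St (QItem r 1 (length u)), (\<xi>, [1]), [])"
    and box: "\<xi> [1] = Some (Lab GBox)"
  shows "w \<in> tsa_lang (automaton G)"
proof -
  let ?\<xi>' = "\<xi>([1] \<mapsto> Lab (GRule r))"
  have push: "((St QBox, init_ts, w), (St (QItem r 1 0), ([[] \<mapsto> At, [1] \<mapsto> Lab GBox], [1]), w))
        \<in> tsa_step (automaton G)"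
    by (rule tsa_step_of_mtrans[OF mtrans.i1[OF r]]) (simp_all add: init_ts_def)
  have set: "((St (QItem r 1 (length u)), (\<xi>, [1]), []), (StM QBox, (?\<xi>', [1]), []))
        \<in> tsa_step (automaton G)"
    by (rule tsa_step_of_mtrans[OF mtrans.i2[OF r]]) (use box in simp_all)
  have down: "((StM QBox, (?\<xi>', [1]), []), (St QBox, (?\<xi>', []), [])) \<in> tsa_step (automaton G)"
    by (rule tsa_step_of_mtrans[OF mtrans.i3[OF r]]) simp_all
  have "init (automaton G) = St QBox" "St QBox \<in> finals (automaton G)"
    by (simp_all add: automaton_def)
  moreover have "runs G (St QBox, init_ts, w) (St QBox, (?\<xi>', []), [])"
    using converse_rtrancl_into_rtrancl[OF push rtrancl_into_rtrancl[OF rtrancl_into_rtrancl[OF run set] down]] .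
  ultimately show ?thesis
    unfolding tsa_lang_def by auto
qed

lemma derived_word_accepted:
  fixes G :: "('n,'a) pmcfg"
  assumes wf: "wf_pmcfg G" and S: "S \<in> initials G" and d: "derivation G d S [w]"
  shows "w \<in> tsa_lang (automaton G)"
proof -
  obtain us As ds where root: "d = DNode (S, us, As) ds" "(S, us, As) \<in> rules G"
    and "length [w] = length us"
    using d by (rule derivation_root)
  then obtain u where u: "us = [u]"
    by (metis length_0_conv length_Suc_conv list.size(4))
  define \<xi>0 where "\<xi>0 = [[] \<mapsto> At, [1 :: nat] \<mapsto> Lab (GBox :: ('n,'a) gsym)]"
  have "consistent d \<xi>0 [1]"
    by (rule consistent_if_unvisited) (simp add: \<xi>0_def)
  with derivation_simulates[OF wf d] have "\<exists>\<xi>.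
      runs G (St (QItem (S, [u], As) 1 0), (\<xi>0, [1]), w)
             (St (QItem (S, [u], As) 1 (length u)), (\<xi>, [1]), []) \<and>
      consistent d \<xi> [1] \<and> unchanged_outside [1] \<xi>0 \<xi>"
    unfolding simulates_def by (simp add: root u)
  then obtain \<xi> where run: "runs G (St (QItem (S, [u], As) 1 0), (\<xi>0, [1]), w)
                                 (St (QItem (S, [u], As) 1 (length u)), (\<xi>, [1]), [])"
    and out: "unchanged_outside [1] \<xi>0 \<xi>" by blast
  have "\<xi> [1] = Some (Lab GBox)"
    using unchanged_outside_root[OF out] by (simp add: \<xi>0_def)
  with run show ?thesis
    unfolding \<xi>0_def by (rule accepting_run_of_initial_rule[OF refl root(2)[unfolded u] S])
qed

theorem mainTheorem5:
  fixes G :: "('n, 'a) pmcfg"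
  assumes "wf_pmcfg G"
  shows "pmcfg_lang G \<subseteq> tsa_lang (automaton G)"
proof
  fix w assume "w \<in> pmcfg_lang G"
  then obtain S where S: "S \<in> initials G" and gen: "generates G S [w]"
    unfolding pmcfg_lang_def by blast
  obtain d where "derivation G d S [w]"
    using generates_imp_derivation[OF gen] by blast
  then show "w \<in> tsa_lang (automaton G)"
    by (rule derived_word_accepted[OF assms S])
qed

end
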